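(* Let $\mathbf{a}\in\mathbb{C}^n$, $\beta>0$ and $f(\mathbf{z})=\frac12|\mathbf{a}^*\mathbf{z}|^2+\frac{\beta}{2}\|\mathbf{z}\|_4^4$. If $\mathbf{z}$ is a local minimizer of $f$ on $\mathbb{CS}^{n-1}$ with $\mathbf{a}^*\mathbf{z}=0$, then $\mathbf{z}$ has at most one zero component, and all nonzero components of $\mathbf{z}$ have the same modulus.
   Context: $\mathbb{CS}^{n-1}=\{\mathbf{z}\in\mathbb{C}^n:\|\mathbf{z}\|_2=1\}$; $\|\mathbf{z}\|_4^4=\sum_k|z_k|^4$. *)

theory Defs
  imports "HOL-Analysis.Analysis"
begin

definition csphere :: "(complex ^ 'n) set" where
  "csphere = {z. (\<Sum>k\<in>UNIV. (cmod (z $ k))\<^sup>2) = 1}"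

definition cinner_star :: "complex ^ 'n \<Rightarrow> complex ^ 'n \<Rightarrow> complex" where
  "cinner_star a z = (\<Sum>k\<in>UNIV. cnj (a $ k) * z $ k)"

definition f_obj :: "complex ^ 'n \<Rightarrow> real \<Rightarrow> complex ^ 'n \<Rightarrow> real" where
  "f_obj a \<beta> z = (1/2) * (cmod (cinner_star a z))\<^sup>2 + (\<beta>/2) * (\<Sum>k\<in>UNIV. (cmod (z $ k)) ^ 4)"

definition local_min_on :: "('a::metric_space \<Rightarrow> real) \<Rightarrow> 'a set \<Rightarrow> 'a \<Rightarrow> bool" where
  "local_min_on g S z \<longleftrightarrow> z \<in> S \<and> (\<exists>\<epsilon>>0. \<forall>w\<in>S. dist w z < \<epsilon> \<longrightarrow> g z \<le> g w)"

end

theory Submission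
  imports Defs
begin

(*
  Both claims are proved by exhibiting, from a local minimizer z, a curve on the sphere that
  starts at z and along which f strictly decreases.
  If z has two zero components j, k, rotate z towards a unit vector u supported on {j, k}
  with a^* u = 0: the first term of f stays 0 and, as z and u have disjoint supports, the
  quartic term becomes cos^4 theta ||z||_4^4 + sin^4 theta ||u||_4^4, which drops at order theta^2.
  If 0 < |z_k| < |z_j|, shift an amount t of squared modulus from z_j to z_k keeping the
  phases: the quartic term drops by 2t(|z_j|^2 - |z_k|^2) - 2t^2, while a^* z = 0 makes the
  first term grow only by O(t^2).
*)

lemma local_min_on_not_eventually_less:
  assumes "local_min_on g S z" and "(w \<longlongrightarrow> z) F" and "F \<noteq> bot"
  shows "\<not> (\<forall>\<^sub>F t in F. w t \<in> S \<and> g (w t) < g z)"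
proof
  assume descent: "\<forall>\<^sub>F t in F. w t \<in> S \<and> g (w t) < g z"
  obtain \<epsilon> where "\<epsilon> > 0" and min: "\<forall>v\<in>S. dist v z < \<epsilon> \<longrightarrow> g z \<le> g v"
    using assms(1) unfolding local_min_on_def by blast
  have "\<forall>\<^sub>F t in F. dist (w t) z < \<epsilon>"
    using assms(2) \<open>\<epsilon> > 0\<close> by (rule tendstoD)
  with descent have "\<forall>\<^sub>F t in F. False"
    by eventually_elim (use min in force)
  with assms(3) show False
    by (simp add: eventually_False)
qed

lemma sum_UNIV_supported_on_two:
  fixes g :: "'a::finite \<Rightarrow> 'b::comm_monoid_add"
  assumes "j \<noteq> k" and "\<And>i. i \<noteq> j \<Longrightarrow> i \<noteq> k \<Longrightarrow> g i = 0"
  shows "sum g UNIV = g j + g k"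
proof -
  have "sum g UNIV = sum g {j, k}"
    using assms(2) by (intro sum.mono_neutral_right) auto
  with assms(1) show ?thesis
    by simp
qed

lemma sum_diff_vec_eq_off_two:
  fixes x y :: "'a ^ 'n" and g :: "'n \<Rightarrow> 'a \<Rightarrow> 'b::ab_group_add"
  assumes "j \<noteq> k" and "\<And>i. i \<noteq> j \<Longrightarrow> i \<noteq> k \<Longrightarrow> x $ i = y $ i"
  shows "(\<Sum>i\<in>UNIV. g i (x $ i)) - (\<Sum>i\<in>UNIV. g i (y $ i))
    = (g j (x $ j) - g j (y $ j)) + (g k (x $ k) - g k (y $ k))"
  unfolding sum_subtractf[symmetric] using assms by (intro sum_UNIV_supported_on_two) auto

lemma sum_power_norm_add_disjoint_support:
  fixes x y :: "'a::real_normed_vector ^ 'n"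
  assumes "\<And>i. x $ i = 0 \<or> y $ i = 0" and "n > 0"
  shows "(\<Sum>i\<in>UNIV. norm ((c *\<^sub>R x + s *\<^sub>R y) $ i) ^ n)
    = \<bar>c\<bar> ^ n * (\<Sum>i\<in>UNIV. norm (x $ i) ^ n) + \<bar>s\<bar> ^ n * (\<Sum>i\<in>UNIV. norm (y $ i) ^ n)"
proof -
  have "norm ((c *\<^sub>R x + s *\<^sub>R y) $ i) ^ n = \<bar>c\<bar> ^ n * norm (x $ i) ^ n + \<bar>s\<bar> ^ n * norm (y $ i) ^ n"
    for i
    using assms(1)[of i] \<open>n > 0\<close> by (auto simp: power_mult_distrib)
  then show ?thesis
    by (simp add: sum.distrib sum_distrib_left)
qed

lemma abs_sqrt_one_plus_minus_one_le:
  assumes "-1 \<le> x"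
  shows "\<bar>sqrt (1 + x) - 1\<bar> \<le> \<bar>x\<bar>"
proof -
  define s where "s = sqrt (1 + x)"
  have "s \<ge> 0" and "s\<^sup>2 = 1 + x"
    using assms unfolding s_def by simp_all
  have "\<bar>s - 1\<bar> * 1 \<le> \<bar>s - 1\<bar> * (s + 1)"
    using \<open>s \<ge> 0\<close> by (intro mult_left_mono) auto
  also have "\<dots> = \<bar>(s - 1) * (s + 1)\<bar>"
    using \<open>s \<ge> 0\<close> by (simp add: abs_mult)
  also have "\<dots> = \<bar>x\<bar>"
    using \<open>s\<^sup>2 = 1 + x\<close> by (simp add: power2_eq_square algebra_simps)
  finally show ?thesis
    unfolding s_def by simp
qed

lemma csphere_sum_power4_pos:
  assumes "z \<in> csphere"
  shows "0 < (\<Sum>i\<in>UNIV. cmod (z $ i) ^ 4)"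
proof -
  obtain k where "z $ k \<noteq> 0"
    using assms unfolding csphere_def by force
  then have "0 < cmod (z $ k) ^ 4"
    by simp
  also have "\<dots> \<le> (\<Sum>i\<in>UNIV. cmod (z $ i) ^ 4)"
    by (rule member_le_sum) auto
  finally show ?thesis .
qed

lemma csphere_sum_power4_le_1:
  assumes "z \<in> csphere"
  shows "(\<Sum>i\<in>UNIV. cmod (z $ i) ^ 4) \<le> 1"
proof -
  have "(cmod (z $ i))\<^sup>2 \<le> 1" for i
    using member_le_sum[of i UNIV "\<lambda>i. (cmod (z $ i))\<^sup>2"] assms unfolding csphere_def by simp
  then have "cmod (z $ i) ^ 4 \<le> (cmod (z $ i))\<^sup>2" for i
    using mult_right_mono[of "(cmod (z $ i))\<^sup>2" 1 "(cmod (z $ i))\<^sup>2"]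
    by (simp add: power4_eq_xxxx power2_eq_square mult.assoc)
  then have "(\<Sum>i\<in>UNIV. cmod (z $ i) ^ 4) \<le> (\<Sum>i\<in>UNIV. (cmod (z $ i))\<^sup>2)"
    by (rule sum_mono)
  with assms show ?thesis
    unfolding csphere_def by simp
qed

lemma cinner_star_add: "cinner_star a (x + y) = cinner_star a x + cinner_star a y"
  unfolding cinner_star_def by (simp add: distrib_left sum.distrib)

lemma cinner_star_scaleR: "cinner_star a (r *\<^sub>R x) = of_real r * cinner_star a x"
  unfolding cinner_star_def
  by (simp add: sum_distrib_left, simp add: scaleR_conv_of_real mult.left_commute)

lemma exists_unit_pair_orthogonal:
  fixes x y :: complex
  obtains u v where "cnj x * u + cnj y * v = 0" and "(cmod u)\<^sup>2 + (cmod v)\<^sup>2 = 1"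
proof (cases "x = 0 \<and> y = 0")
  case True
  then show ?thesis
    using that[of 1 0] by simp
next
  case False
  define N where "N = sqrt ((cmod x)\<^sup>2 + (cmod y)\<^sup>2)"
  have "(cmod x)\<^sup>2 + (cmod y)\<^sup>2 > 0"
    using False by (simp add: sum_power2_gt_zero_iff)
  then have "N > 0" and N2: "N\<^sup>2 = (cmod x)\<^sup>2 + (cmod y)\<^sup>2"
    unfolding N_def by simp_all
  show ?thesis
  proof (rule that[of "cnj y / of_real N" "- cnj x / of_real N"])
    show "cnj x * (cnj y / of_real N) + cnj y * (- cnj x / of_real N) = 0"
      by (simp add: field_simps)
    show "(cmod (cnj y / of_real N))\<^sup>2 + (cmod (- cnj x / of_real N))\<^sup>2 = 1"
      using \<open>N > 0\<close> N2 False by (simp add: norm_divide power_divide add_divide_distrib[symmetric])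
  qed
qed

lemma exists_csphere_orthogonal_supported_on_two:
  fixes a :: "complex ^ 'n"
  assumes "j \<noteq> k"
  obtains u where "u \<in> csphere" and "cinner_star a u = 0"
    and "\<And>i. i \<noteq> j \<Longrightarrow> i \<noteq> k \<Longrightarrow> u $ i = 0"
proof -
  obtain u1 u2 where orth: "cnj (a $ j) * u1 + cnj (a $ k) * u2 = 0"
    and unit: "(cmod u1)\<^sup>2 + (cmod u2)\<^sup>2 = 1"
    by (rule exists_unit_pair_orthogonal)
  define u :: "complex ^ 'n" where "u = (\<chi> i. if i = j then u1 else if i = k then u2 else 0)"
  have supp: "u $ i = 0" if "i \<noteq> j" "i \<noteq> k" for i
    using that unfolding u_def by simp
  have "u \<in> csphere"
    using sum_UNIV_supported_on_two[OF assms, of "\<lambda>i. (cmod (u $ i))\<^sup>2"] supp unit assms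
    unfolding csphere_def u_def by simp
  moreover have "cinner_star a u = 0"
    using sum_UNIV_supported_on_two[OF assms, of "\<lambda>i. cnj (a $ i) * u $ i"] supp orth assms
    unfolding cinner_star_def u_def by simp
  ultimately show ?thesis
    using that supp by blast
qed

lemma local_min_at_most_one_zero_component:
  fixes a z :: "complex ^ 'n"
  assumes "\<beta> > 0" and min: "local_min_on (f_obj a \<beta>) csphere z" and "cinner_star a z = 0"
    and "j \<noteq> k" and "z $ j = 0"
  shows "z $ k \<noteq> 0"
proof
  assume "z $ k = 0"
  have "z \<in> csphere"
    using min unfolding local_min_on_def by blast
  obtain u where "u \<in> csphere" and "cinner_star a u = 0"
    and supp: "\<And>i. i \<noteq> j \<Longrightarrow> i \<noteq> k \<Longrightarrow> u $ i = 0"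
    using exists_csphere_orthogonal_supported_on_two \<open>j \<noteq> k\<close> by blast
  have disjoint: "z $ i = 0 \<or> u $ i = 0" for i
    using supp \<open>z $ j = 0\<close> \<open>z $ k = 0\<close> by metis
  define w where "w \<theta> = cos \<theta> *\<^sub>R z + sin \<theta> *\<^sub>R u" for \<theta>
  define Z where "Z = (\<Sum>i\<in>UNIV. cmod (z $ i) ^ 4)"
  have "Z > 0"
    unfolding Z_def using \<open>z \<in> csphere\<close> by (rule csphere_sum_power4_pos)
  have descent: "w \<theta> \<in> csphere \<and> f_obj a \<beta> (w \<theta>) < f_obj a \<beta> z"
    if "sin \<theta> \<noteq> 0" and "(sin \<theta>)\<^sup>2 * (Z + 1) < 2 * Z" for \<theta>
  proof
    show "w \<theta> \<in> csphere"
      using sum_power_norm_add_disjoint_support[OF disjoint, of 2 "cos \<theta>" "sin \<theta>"]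
        \<open>z \<in> csphere\<close> \<open>u \<in> csphere\<close>
      unfolding csphere_def w_def by simp
    have "cinner_star a (w \<theta>) = 0"
      unfolding w_def by (simp add: cinner_star_add cinner_star_scaleR assms(3) \<open>cinner_star a u = 0\<close>)
    then have "f_obj a \<beta> (w \<theta>) - f_obj a \<beta> z
        = \<beta> / 2 * ((cos \<theta>) ^ 4 * Z + (sin \<theta>) ^ 4 * (\<Sum>i\<in>UNIV. cmod (u $ i) ^ 4) - Z)"
      using sum_power_norm_add_disjoint_support[OF disjoint, of 4 "cos \<theta>" "sin \<theta>"]
      unfolding f_obj_def w_def Z_def assms(3) by (simp add: power_even_abs algebra_simps)
    also have "\<dots> \<le> \<beta> / 2 * ((1 - (sin \<theta>)\<^sup>2)\<^sup>2 * Z + (sin \<theta>) ^ 4 - Z)"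
      using csphere_sum_power4_le_1[OF \<open>u \<in> csphere\<close>] \<open>\<beta> > 0\<close>
      by (simp add: cos_squared_eq[symmetric] power_mult[of _ 2 2, simplified] mult_left_le)
    also have "\<dots> = \<beta> / 2 * (sin \<theta>)\<^sup>2 * ((sin \<theta>)\<^sup>2 * (Z + 1) - 2 * Z)"
      by (simp add: power2_eq_square power4_eq_xxxx algebra_simps)
    also have "\<dots> < 0"
      using that \<open>\<beta> > 0\<close> by (simp add: mult_pos_neg)
    finally show "f_obj a \<beta> (w \<theta>) < f_obj a \<beta> z"
      by simp
  qed
  have "\<forall>\<^sub>F \<theta> in at_right 0. 0 < \<theta> \<and> \<theta> < pi \<and> (sin \<theta>)\<^sup>2 * (Z + 1) < 2 * Z"
  proof (intro eventually_conj)
    show "\<forall>\<^sub>F \<theta> in at_right 0. (0::real) < \<theta>"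
      by (rule eventually_at_right_less)
    show "\<forall>\<^sub>F \<theta> in at_right 0. \<theta> < pi"
      by (rule order_tendstoD(2)[OF tendsto_ident_at pi_gt_zero])
    have "((\<lambda>\<theta>. (sin \<theta>)\<^sup>2 * (Z + 1)) \<longlongrightarrow> 0) (at_right 0)"
      by (rule tendsto_eq_intros refl | simp)+
    then show "\<forall>\<^sub>F \<theta> in at_right 0. (sin \<theta>)\<^sup>2 * (Z + 1) < 2 * Z"
      by (rule order_tendstoD(2)) (use \<open>Z > 0\<close> in simp)
  qed
  then have "\<forall>\<^sub>F \<theta> in at_right 0. w \<theta> \<in> csphere \<and> f_obj a \<beta> (w \<theta>) < f_obj a \<beta> z"
    by eventually_elim (use descent sin_gt_zero in force)
  moreover have "(w \<longlongrightarrow> z) (at_right 0)"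
    unfolding w_def by (rule tendsto_eq_intros refl | simp)+
  ultimately show False
    using local_min_on_not_eventually_less[OF min _ trivial_limit_at_right_real] by blast
qed

definition mass_transfer :: "complex ^ 'n \<Rightarrow> 'n \<Rightarrow> 'n \<Rightarrow> real \<Rightarrow> complex ^ 'n" where
  "mass_transfer z j k t = (\<chi> i.
     if i = j then of_real (sqrt (1 - t / (cmod (z $ j))\<^sup>2)) * z $ j
     else if i = k then of_real (sqrt (1 + t / (cmod (z $ k))\<^sup>2)) * z $ k
     else z $ i)"

lemma mass_transfer_nth_other: "i \<noteq> j \<Longrightarrow> i \<noteq> k \<Longrightarrow> mass_transfer z j k t $ i = z $ i"
  unfolding mass_transfer_def by simp

lemma norm_mass_transfer_source:
  assumes "z $ j \<noteq> 0" and "t \<le> (cmod (z $ j))\<^sup>2"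
  shows "(cmod (mass_transfer z j k t $ j))\<^sup>2 = (cmod (z $ j))\<^sup>2 - t"
  using assms by (simp add: mass_transfer_def norm_mult power_mult_distrib field_simps)

lemma norm_mass_transfer_target:
  assumes "j \<noteq> k" and "z $ k \<noteq> 0" and "0 \<le> t"
  shows "(cmod (mass_transfer z j k t $ k))\<^sup>2 = (cmod (z $ k))\<^sup>2 + t"
  using assms by (simp add: mass_transfer_def norm_mult power_mult_distrib field_simps add_nonneg_nonneg)

lemma tendsto_mass_transfer: "(mass_transfer z j k \<longlongrightarrow> z) (at 0 within S)"
proof (rule vec_tendstoI)
  fix i
  show "((\<lambda>t. mass_transfer z j k t $ i) \<longlongrightarrow> z $ i) (at 0 within S)"
    unfolding mass_transfer_def vec_lambda_beta
    by (cases "i = j"; cases "i = k") (auto simp: divide_inverse intro!: tendsto_eq_intros)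
qed

lemma mass_transfer_in_csphere:
  assumes "z \<in> csphere" and "j \<noteq> k" and "z $ j \<noteq> 0" and "z $ k \<noteq> 0"
    and "0 \<le> t" and "t \<le> (cmod (z $ j))\<^sup>2"
  shows "mass_transfer z j k t \<in> csphere"
proof -
  have "(\<Sum>i\<in>UNIV. (cmod (mass_transfer z j k t $ i))\<^sup>2) - (\<Sum>i\<in>UNIV. (cmod (z $ i))\<^sup>2) = 0"
    using assms
    by (subst sum_diff_vec_eq_off_two[OF \<open>j \<noteq> k\<close> mass_transfer_nth_other])
      (simp_all add: norm_mass_transfer_source norm_mass_transfer_target)
  with assms(1) show ?thesis
    unfolding csphere_def by simp
qed

lemma sum_power4_mass_transfer:
  assumes "j \<noteq> k" and "z $ j \<noteq> 0" and "z $ k \<noteq> 0" and "0 \<le> t" and "t \<le> (cmod (z $ j))\<^sup>2"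
  shows "(\<Sum>i\<in>UNIV. cmod (mass_transfer z j k t $ i) ^ 4) - (\<Sum>i\<in>UNIV. cmod (z $ i) ^ 4)
    = 2 * t * (t - ((cmod (z $ j))\<^sup>2 - (cmod (z $ k))\<^sup>2))"
proof -
  have pow4: "x ^ 4 = (x\<^sup>2)\<^sup>2" for x :: real
    by simp
  have "(\<Sum>i\<in>UNIV. ((cmod (mass_transfer z j k t $ i))\<^sup>2)\<^sup>2) - (\<Sum>i\<in>UNIV. ((cmod (z $ i))\<^sup>2)\<^sup>2)
      = (((cmod (z $ j))\<^sup>2 - t)\<^sup>2 - ((cmod (z $ j))\<^sup>2)\<^sup>2) + (((cmod (z $ k))\<^sup>2 + t)\<^sup>2 - ((cmod (z $ k))\<^sup>2)\<^sup>2)"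
    by (subst sum_diff_vec_eq_off_two[OF \<open>j \<noteq> k\<close> mass_transfer_nth_other])
      (simp_all only: norm_mass_transfer_source[OF assms(2,5)] norm_mass_transfer_target[OF assms(1,3,4)] not_False_eq_True)
  also have "\<dots> = 2 * t * (t - ((cmod (z $ j))\<^sup>2 - (cmod (z $ k))\<^sup>2))"
    by (simp add: power2_eq_square algebra_simps)
  finally show ?thesis
    unfolding pow4 .
qed

lemma norm_cinner_star_mass_transfer_le:
  assumes "j \<noteq> k" and "z $ j \<noteq> 0" and "z $ k \<noteq> 0" and "0 \<le> t" and "t \<le> (cmod (z $ j))\<^sup>2"
  shows "cmod (cinner_star a (mass_transfer z j k t) - cinner_star a z)
    \<le> t * (cmod (a $ j) / cmod (z $ j) + cmod (a $ k) / cmod (z $ k))"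
proof -
  define cj where "cj = sqrt (1 - t / (cmod (z $ j))\<^sup>2)"
  define ck where "ck = sqrt (1 + t / (cmod (z $ k))\<^sup>2)"
  have "cinner_star a (mass_transfer z j k t) - cinner_star a z
      = (cnj (a $ j) * mass_transfer z j k t $ j - cnj (a $ j) * z $ j)
        + (cnj (a $ k) * mass_transfer z j k t $ k - cnj (a $ k) * z $ k)"
    unfolding cinner_star_def by (rule sum_diff_vec_eq_off_two[OF \<open>j \<noteq> k\<close> mass_transfer_nth_other])
  also have "\<dots> = of_real (cj - 1) * (cnj (a $ j) * z $ j) + of_real (ck - 1) * (cnj (a $ k) * z $ k)"
    using \<open>j \<noteq> k\<close> by (auto simp: mass_transfer_def cj_def ck_def algebra_simps)
  finally have diff: "cinner_star a (mass_transfer z j k t) - cinner_star a z = \<dots>" .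
  have bound_j: "\<bar>cj - 1\<bar> \<le> t / (cmod (z $ j))\<^sup>2"
    using abs_sqrt_one_plus_minus_one_le[of "- t / (cmod (z $ j))\<^sup>2"] assms unfolding cj_def by simp
  have "0 \<le> t / (cmod (z $ k))\<^sup>2"
    using \<open>0 \<le> t\<close> by simp
  then have bound_k: "\<bar>ck - 1\<bar> \<le> t / (cmod (z $ k))\<^sup>2"
    using abs_sqrt_one_plus_minus_one_le[of "t / (cmod (z $ k))\<^sup>2"] unfolding ck_def by simp
  have norm_of_real_minus_1: "cmod (of_real c - 1) = \<bar>c - 1\<bar>" for c
    by (metis norm_of_real of_real_1 of_real_diff)
  have "cmod (cinner_star a (mass_transfer z j k t) - cinner_star a z)
      \<le> \<bar>cj - 1\<bar> * (cmod (a $ j) * cmod (z $ j)) + \<bar>ck - 1\<bar> * (cmod (a $ k) * cmod (z $ k))"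
    unfolding diff by (rule order_trans[OF norm_triangle_ineq]) (simp add: norm_mult norm_of_real_minus_1)
  also have "\<dots> \<le> t / (cmod (z $ j))\<^sup>2 * (cmod (a $ j) * cmod (z $ j))
      + t / (cmod (z $ k))\<^sup>2 * (cmod (a $ k) * cmod (z $ k))"
    using bound_j bound_k by (intro add_mono mult_right_mono) auto
  also have "\<dots> = t * (cmod (a $ j) / cmod (z $ j) + cmod (a $ k) / cmod (z $ k))"
    using assms by (simp add: power2_eq_square field_simps)
  finally show ?thesis .
qed

lemma f_obj_mass_transfer_le:
  assumes "cinner_star a z = 0"
    and "j \<noteq> k" and "z $ j \<noteq> 0" and "z $ k \<noteq> 0" and "0 \<le> t" and "t \<le> (cmod (z $ j))\<^sup>2"
  shows "f_obj a \<beta> (mass_transfer z j k t) - f_obj a \<beta> z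
    \<le> t * (t * ((cmod (a $ j) / cmod (z $ j) + cmod (a $ k) / cmod (z $ k))\<^sup>2 / 2 + \<beta>)
           - \<beta> * ((cmod (z $ j))\<^sup>2 - (cmod (z $ k))\<^sup>2))"
proof -
  define A where "A = cmod (a $ j) / cmod (z $ j) + cmod (a $ k) / cmod (z $ k)"
  have "cmod (cinner_star a (mass_transfer z j k t)) \<le> t * A"
    using norm_cinner_star_mass_transfer_le[OF assms(2-), where a = a] assms(1) unfolding A_def by simp
  then have "(cmod (cinner_star a (mass_transfer z j k t)))\<^sup>2 \<le> (t * A)\<^sup>2"
    by (simp add: power_mono)
  then have "f_obj a \<beta> (mass_transfer z j k t) - f_obj a \<beta> z
      \<le> (t * A)\<^sup>2 / 2 + \<beta> / 2 * ((\<Sum>i\<in>UNIV. cmod (mass_transfer z j k t $ i) ^ 4) - (\<Sum>i\<in>UNIV. cmod (z $ i) ^ 4))"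
    unfolding f_obj_def assms(1) by (simp add: algebra_simps)
  also have "\<dots> = t * (t * (A\<^sup>2 / 2 + \<beta>) - \<beta> * ((cmod (z $ j))\<^sup>2 - (cmod (z $ k))\<^sup>2))"
    unfolding sum_power4_mass_transfer[OF assms(2-)] by (simp add: power2_eq_square algebra_simps)
  finally show ?thesis
    unfolding A_def .
qed

lemma local_min_norm_le_nonzero_component:
  fixes a z :: "complex ^ 'n"
  assumes "\<beta> > 0" and min: "local_min_on (f_obj a \<beta>) csphere z" and "cinner_star a z = 0"
    and "z $ k \<noteq> 0"
  shows "cmod (z $ j) \<le> cmod (z $ k)"
proof (rule ccontr)
  assume "\<not> cmod (z $ j) \<le> cmod (z $ k)"
  then have "j \<noteq> k" and "z $ j \<noteq> 0" and less: "cmod (z $ k) < cmod (z $ j)"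
    by auto
  have "z \<in> csphere"
    using min unfolding local_min_on_def by blast
  define p where "p = (cmod (z $ j))\<^sup>2"
  define q where "q = (cmod (z $ k))\<^sup>2"
  define K where "K = (cmod (a $ j) / cmod (z $ j) + cmod (a $ k) / cmod (z $ k))\<^sup>2 / 2 + \<beta>"
  have "0 < q" and "q < p"
    unfolding p_def q_def using less \<open>z $ k \<noteq> 0\<close> by (simp_all add: power_strict_mono)
  have "\<forall>\<^sub>F t in at_right 0. 0 < t \<and> t < q \<and> t * K < \<beta> * (p - q)"
  proof (intro eventually_conj)
    show "\<forall>\<^sub>F t in at_right 0. (0::real) < t"
      by (rule eventually_at_right_less)
    show "\<forall>\<^sub>F t in at_right 0. t < q"
      by (rule order_tendstoD(2)[OF tendsto_ident_at \<open>0 < q\<close>])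
    have "((\<lambda>t. t * K) \<longlongrightarrow> 0) (at_right 0)"
      by (rule tendsto_eq_intros refl | simp)+
    then show "\<forall>\<^sub>F t in at_right 0. t * K < \<beta> * (p - q)"
      by (rule order_tendstoD(2)) (use \<open>\<beta> > 0\<close> \<open>q < p\<close> in simp)
  qed
  then have "\<forall>\<^sub>F t in at_right 0.
      mass_transfer z j k t \<in> csphere \<and> f_obj a \<beta> (mass_transfer z j k t) < f_obj a \<beta> z"
  proof eventually_elim
    case (elim t)
    then have "0 \<le> t" and "t \<le> (cmod (z $ j))\<^sup>2"
      using \<open>q < p\<close> unfolding p_def by auto
    note hyps = \<open>j \<noteq> k\<close> \<open>z $ j \<noteq> 0\<close> \<open>z $ k \<noteq> 0\<close> this
    have "f_obj a \<beta> (mass_transfer z j k t) - f_obj a \<beta> z \<le> t * (t * K - \<beta> * (p - q))"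
      using f_obj_mass_transfer_le[OF assms(3) hyps] unfolding K_def p_def q_def .
    also have "\<dots> < 0"
      using elim by (simp add: mult_pos_neg)
    finally show ?case
      using mass_transfer_in_csphere[OF \<open>z \<in> csphere\<close> hyps] by simp
  qed
  with local_min_on_not_eventually_less[OF min tendsto_mass_transfer trivial_limit_at_right_real]
  show False
    by blast
qed

theorem theorem8:
  fixes a z :: "complex ^ 'n" and \<beta> :: real
  assumes "\<beta> > 0"
    and "local_min_on (f_obj a \<beta>) csphere z"
    and "cinner_star a z = 0"
  shows "card {k. z $ k = 0} \<le> 1
    \<and> (\<forall>j k. z $ j \<noteq> 0 \<longrightarrow> z $ k \<noteq> 0 \<longrightarrow> cmod (z $ j) = cmod (z $ k))"
proof
  show "card {k. z $ k = 0} \<le> 1"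
    using local_min_at_most_one_zero_component[OF assms] by (auto simp: card_le_Suc0_iff_eq)
  show "\<forall>j k. z $ j \<noteq> 0 \<longrightarrow> z $ k \<noteq> 0 \<longrightarrow> cmod (z $ j) = cmod (z $ k)"
    using local_min_norm_le_nonzero_component[OF assms] by (blast intro: order.antisym)
qed

end
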